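(* Let $F:\mathbb{R}^n\to\mathbb{R}$ be a ReLU neural network function, let $C$ be a flat $n$-cell of $\mathcal{C}(F)$, and let $C'$ be an $n$-cell of $\mathcal{C}(F)$ such that $C\cap C'$ is a common $(n-1)$-dimensional face $D$. Let $E_1,E_2$ be $1$-cells of $C'$, neither contained in $C$, each having an endpoint in $C$. Then $E_1$ and $E_2$ receive the same $\nabla F$-orientation: both point away from $C$, both point toward $C$, or both are unoriented (flat).
   Context: A ReLU neural network function is $F=A_{m+1}\circ\sigma\circ A_m\circ\cdots\circ\sigma\circ A_1$ with affine $A_i$ and coordinatewise ReLU $\sigma$. Its canonical polyhedral complex $\mathcal{C}(F)$ is the polyhedral decomposition of the input space whose cells are the closures of the nonempty sets on which the sign vector of all pre-activations is constant; $F$ is affine on each cell. A cell is flat if $F$ is constant on it. $\nabla F$-orientation: a $1$-cell on which $F$ is nonconstant is oriented in the direction of increasing $F$; flat $1$-cells are unoriented. *)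

theory Defs
  imports "HOL-Analysis.Analysis"
begin

text \<open>First layer A_1: list of neurons (a, c), pre-activation a \<bullet> x + c.
  Further hidden layers A_2 .. A_m: lists of neurons (w, c) acting on the
  previous post-activation vector (a real list).  Output layer A_{m+1}: a single
  neuron (w, c).  F = A_{m+1} o sigma o A_m o ... o sigma o A_1.\<close>

type_synonym 'n relu_net =
  "((real^'n) \<times> real) list \<times> (real list \<times> real) list list \<times> (real list \<times> real)"

definition relu :: "real \<Rightarrow> real" where
  "relu t = max 0 t"

definition neuron :: "real list \<times> real \<Rightarrow> real list \<Rightarrow> real" where
  "neuron wc v = sum_list (map2 (*) (fst wc) v) + snd wc"

definition apply_layer :: "(real list \<times> real) list \<Rightarrow> real list \<Rightarrow> real list" where
  "apply_layer H v = map (\<lambda>wc. neuron wc v) H"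

fun wf_layers :: "nat \<Rightarrow> (real list \<times> real) list list \<Rightarrow> real list \<times> real \<Rightarrow> bool" where
  "wf_layers d [] out = (length (fst out) = d)"
| "wf_layers d (H # Hs) out =
     ((\<forall>wc\<in>set H. length (fst wc) = d) \<and> wf_layers (length H) Hs out)"

definition wf_net :: "'n relu_net \<Rightarrow> bool" where
  "wf_net N = wf_layers (length (fst N)) (fst (snd N)) (snd (snd N))"

fun preacts_from :: "(real list \<times> real) list list \<Rightarrow> real list \<Rightarrow> real list list" where
  "preacts_from [] z = []"
| "preacts_from (H # Hs) z =
     (let z' = apply_layer H (map relu z) in z' # preacts_from Hs z')"

definition first_pre :: "'n::finite relu_net \<Rightarrow> real^'n \<Rightarrow> real list" where
  "first_pre N x = map (\<lambda>(a, c). a \<bullet> x + c) (fst N)"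

definition layer_pres :: "'n::finite relu_net \<Rightarrow> real^'n \<Rightarrow> real list list" where
  "layer_pres N x = first_pre N x # preacts_from (fst (snd N)) (first_pre N x)"

definition all_pre :: "'n::finite relu_net \<Rightarrow> real^'n \<Rightarrow> real list" where
  "all_pre N x = concat (layer_pres N x)"

definition net_fun :: "'n::finite relu_net \<Rightarrow> real^'n \<Rightarrow> real" where
  "net_fun N x = neuron (snd (snd N)) (map relu (last (layer_pres N x)))"

definition sign_vector :: "'n::finite relu_net \<Rightarrow> real^'n \<Rightarrow> real list" where
  "sign_vector N x = map sgn (all_pre N x)"

text \<open>Cells of the canonical polyhedral complex C(F): closures of the nonempty
  sets on which the sign vector is constant.\<close>
definition cells :: "'n::finite relu_net \<Rightarrow> (real^'n) set set" where
  "cells N = {closure {x. sign_vector N x = s} | s. {x. sign_vector N x = s} \<noteq> {}}"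

definition flat_on :: "('a \<Rightarrow> real) \<Rightarrow> 'a set \<Rightarrow> bool" where
  "flat_on F S \<longleftrightarrow> (\<forall>x\<in>S. \<forall>y\<in>S. F x = F y)"

text \<open>Gradient orientation of a 1-cell E relative to its endpoint v:
  oriented away from v (F increases leaving v) or toward v (F decreases leaving v).\<close>
definition points_away :: "('a \<Rightarrow> real) \<Rightarrow> 'a set \<Rightarrow> 'a \<Rightarrow> bool" where
  "points_away F E v \<longleftrightarrow> (\<forall>y\<in>E. y \<noteq> v \<longrightarrow> F v < F y)"

definition points_toward :: "('a \<Rightarrow> real) \<Rightarrow> 'a set \<Rightarrow> 'a \<Rightarrow> bool" where
  "points_toward F E v \<longleftrightarrow> (\<forall>y\<in>E. y \<noteq> v \<longrightarrow> F y < F v)"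

end

theory Submission
  imports Defs
begin

text \<open>On a region where the sign vector is constant, every pre-activation is an affine
  function of the input and so is F; hence each cell is convex and F is affine on it,
  say F x = g \<bullet> x + b on C'. The facet D = C \<inter> C' of C' lies in a supporting hyperplane
  a \<bullet> x = c of C', and since F is constant on D, which spans that hyperplane, g = \<mu> a.
  An edge of C' that starts at a point v of D and is not contained in D leaves the hyperplane
  immediately, so F y - F v = \<mu> (a \<bullet> y - c) with a \<bullet> y - c > 0 for every other point y
  of the edge. The sign of the single number \<mu> therefore decides the orientation of all
  such edges at once.\<close>

definition aff_eval :: "'a::real_inner \<Rightarrow> 'a \<times> real \<Rightarrow> real" where
  "aff_eval x gb = fst gb \<bullet> x + snd gb"

lemma aff_eval_segment:
  "aff_eval ((1 - t) *\<^sub>R x + t *\<^sub>R y) gb = (1 - t) * aff_eval x gb + t * aff_eval y gb"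
  by (simp add: aff_eval_def inner_add_right algebra_simps)

fun relu_mask :: "real list \<Rightarrow> ('a::real_inner \<times> real) list \<Rightarrow> ('a \<times> real) list" where
  "relu_mask (s # ss) (g # gs) = (if s = 1 then g else (0, 0)) # relu_mask ss gs"
| "relu_mask _ _ = []"

lemma map_relu_aff_eval:
  "map sgn (map (aff_eval x) G) = \<sigma> \<Longrightarrow>
   map relu (map (aff_eval x) G) = map (aff_eval x) (relu_mask \<sigma> G)"
proof (induction G arbitrary: \<sigma>)
  case (Cons g G)
  then obtain ss where \<sigma>: "\<sigma> = sgn (aff_eval x g) # ss" "map sgn (map (aff_eval x) G) = ss"
    by auto
  have "relu (aff_eval x g) = (if sgn (aff_eval x g) = 1 then aff_eval x g else 0)"
    by (auto simp: relu_def sgn_if)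
  then show ?case using Cons.IH[OF \<sigma>(2)] \<sigma>(1) by (simp add: aff_eval_def)
qed simp

definition neuron_comp :: "real list \<times> real \<Rightarrow> ('a::real_inner \<times> real) list \<Rightarrow> 'a \<times> real" where
  "neuron_comp wc G = (sum_list (map2 (\<lambda>w gb. w *\<^sub>R fst gb) (fst wc) G),
                       sum_list (map2 (\<lambda>w gb. w * snd gb) (fst wc) G) + snd wc)"

lemma neuron_aff_eval: "neuron wc (map (aff_eval x) G) = aff_eval x (neuron_comp wc G)"
proof -
  have "sum_list (map2 (*) w (map (aff_eval x) G)) =
     sum_list (map2 (\<lambda>w gb. w *\<^sub>R fst gb) w G) \<bullet> x + sum_list (map2 (\<lambda>w gb. w * snd gb) w G)"
    for w
  proof (induction w arbitrary: G)
    case (Cons w0 w)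
    then show ?case by (cases G) (auto simp: aff_eval_def inner_add_left algebra_simps)
  qed simp
  then show ?thesis by (simp add: neuron_def neuron_comp_def aff_eval_def)
qed

lemma apply_layer_aff_eval:
  "apply_layer H (map (aff_eval x) G) = map (aff_eval x) (map (\<lambda>wc. neuron_comp wc G) H)"
  by (simp add: apply_layer_def neuron_aff_eval)

text \<open>The affine maps, layer by layer, that compute the pre-activations on the region with
  layerwise sign pattern S, the first layer being G.\<close>
fun pattern_pres :: "(real list \<times> real) list list \<Rightarrow> real list list \<Rightarrow> ('a::real_inner \<times> real) list
    \<Rightarrow> ('a \<times> real) list list" where
  "pattern_pres [] S G = [G]"
| "pattern_pres (H # Hs) S G =
     G # pattern_pres Hs (tl S) (map (\<lambda>wc. neuron_comp wc (relu_mask (hd S) G)) H)"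

lemma pattern_pres_ne: "pattern_pres Hs S G \<noteq> []"
  by (cases Hs) auto

text \<open>Either side may carry the sign pattern S: once the patterns agree layer by layer,
  so do the pre-activations.\<close>
lemma preacts_eq_pattern_pres:
  assumes "S = map (map sgn) (map (aff_eval x) G # preacts_from Hs (map (aff_eval x) G))
         \<or> S = map (map sgn) (map (map (aff_eval x)) (pattern_pres Hs S G))"
  shows "map (aff_eval x) G # preacts_from Hs (map (aff_eval x) G)
       = map (map (aff_eval x)) (pattern_pres Hs S G)"
  using assms
proof (induction Hs arbitrary: G S)
  case (Cons H Hs)
  define G' where "G' = map (\<lambda>wc. neuron_comp wc (relu_mask (hd S) G)) H"
  have hd: "hd S = map sgn (map (aff_eval x) G)" using Cons.prems by (cases S) auto
  have "apply_layer H (map relu (map (aff_eval x) G)) = map (aff_eval x) G'"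
    unfolding G'_def using map_relu_aff_eval[OF hd[symmetric]] by (simp add: apply_layer_aff_eval)
  then have pre: "preacts_from (H # Hs) (map (aff_eval x) G)
                = map (aff_eval x) G' # preacts_from Hs (map (aff_eval x) G')"
    by (simp add: Let_def)
  have "map (aff_eval x) G' # preacts_from Hs (map (aff_eval x) G')
      = map (map (aff_eval x)) (pattern_pres Hs (tl S) G')"
  proof (rule Cons.IH)
    from Cons.prems show "tl S = map (map sgn) (map (aff_eval x) G' # preacts_from Hs (map (aff_eval x) G'))
      \<or> tl S = map (map sgn) (map (map (aff_eval x)) (pattern_pres Hs (tl S) G'))"
    proof
      assume "S = map (map sgn) (map (aff_eval x) G # preacts_from (H # Hs) (map (aff_eval x) G))"
      then show ?thesis unfolding pre by simp
    next
      assume "S = map (map sgn) (map (map (aff_eval x)) (pattern_pres (H # Hs) S G))"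
      then have "tl S = tl (map (map sgn) (map (map (aff_eval x)) (pattern_pres (H # Hs) S G)))"
        by (rule arg_cong)
      then show ?thesis by (simp add: G'_def)
    qed
  qed
  then show ?case by (simp only: pre pattern_pres.simps list.map flip: G'_def)
qed simp

lemma sgn_segment:
  fixes a b t :: real
  assumes "sgn a = sgn b" "0 \<le> t" "t \<le> 1"
  shows "sgn ((1 - t) * a + t * b) = sgn a"
proof (cases a "0::real" rule: linorder_cases)
  case less
  with assms have "b < 0" by (simp add: sgn_if split: if_splits)
  have "(1 - t) * a < 0 \<or> t * b < 0" using less \<open>b < 0\<close> assms
    by (cases "t = 1") (auto simp: mult_pos_neg)
  moreover have "(1 - t) * a \<le> 0" "t * b \<le> 0" using less \<open>b < 0\<close> assms
    by (auto simp: mult_nonneg_nonpos)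
  ultimately show ?thesis using less by (auto simp: sgn_if)
next
  case equal
  with assms show ?thesis by (simp add: sgn_if split: if_splits)
next
  case greater
  with assms have "0 < b" by (simp add: sgn_if split: if_splits)
  have "0 < (1 - t) * a \<or> 0 < t * b" using greater \<open>0 < b\<close> assms by (cases "t = 1") auto
  moreover have "0 \<le> (1 - t) * a" "0 \<le> t * b" using greater \<open>0 < b\<close> assms by auto
  ultimately show ?thesis using greater by (auto simp: sgn_if)
qed

lemma sgn_pattern_segment:
  assumes "map (map sgn) (map (map (aff_eval x)) Gs) = S"
    and "map (map sgn) (map (map (aff_eval y)) Gs) = S" and "0 \<le> t" "t \<le> 1"
  shows "map (map sgn) (map (map (aff_eval ((1 - t) *\<^sub>R x + t *\<^sub>R y))) Gs) = S"
proof -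
  have "sgn (aff_eval x g) = sgn (aff_eval y g)" if "G \<in> set Gs" "g \<in> set G" for G g
    using assms(1,2)[symmetric] that by (auto simp: map_eq_conv)
  then show ?thesis
    using assms by (auto simp: aff_eval_segment sgn_segment map_eq_conv)
qed

lemma concat_inj_same_lengths:
  "map length xs = map length ys \<Longrightarrow> concat xs = concat ys \<Longrightarrow> xs = ys"
proof (induction xs arbitrary: ys)
  case (Cons x xs)
  then show ?case by (cases ys) auto
qed simp

lemma length_preacts_from: "map length (preacts_from Hs z) = map length Hs"
  by (induction Hs arbitrary: z) (auto simp: Let_def apply_layer_def)

lemma first_pre_aff_eval: "first_pre N x = map (aff_eval x) (fst N)"
  by (simp add: first_pre_def aff_eval_def case_prod_beta)

lemma sign_vector_eq_iff:
  "sign_vector N x = sign_vector N y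
   \<longleftrightarrow> map (map sgn) (layer_pres N x) = map (map sgn) (layer_pres N y)"
proof
  assume "sign_vector N x = sign_vector N y"
  then show "map (map sgn) (layer_pres N x) = map (map sgn) (layer_pres N y)"
    by (intro concat_inj_same_lengths)
      (simp_all add: sign_vector_def all_pre_def map_concat layer_pres_def length_preacts_from
        first_pre_def o_def)
qed (simp add: sign_vector_def all_pre_def map_concat)

lemma layer_pres_on_sign_region:
  assumes "sign_vector N x = sign_vector N x0"
  shows "layer_pres N x
       = map (map (aff_eval x)) (pattern_pres (fst (snd N)) (map (map sgn) (layer_pres N x0)) (fst N))"
  using assms unfolding sign_vector_eq_iff layer_pres_def first_pre_aff_eval
  by (intro preacts_eq_pattern_pres) simp

lemma convex_sign_region: "convex {x. sign_vector N x = s}"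
  unfolding convex_alt
proof (intro ballI allI impI, elim conjE)
  fix x y and t :: real
  assume x: "x \<in> {x. sign_vector N x = s}" and y: "y \<in> {x. sign_vector N x = s}"
    and t: "0 \<le> t" "t \<le> 1"
  define w where "w = (1 - t) *\<^sub>R x + t *\<^sub>R y"
  define S where "S = map (map sgn) (layer_pres N x)"
  define Gs where "Gs = pattern_pres (fst (snd N)) S (fst N)"
  have pattern: "map (map sgn) (map (map (aff_eval z)) Gs) = S" if "sign_vector N z = s" for z
  proof -
    have "sign_vector N z = sign_vector N x" using x that by simp
    then have "map (map sgn) (layer_pres N z) = S"
      unfolding S_def by (simp only: sign_vector_eq_iff)
    moreover have "layer_pres N z = map (map (aff_eval z)) Gs"
      unfolding Gs_def S_def by (rule layer_pres_on_sign_region) fact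
    ultimately show ?thesis by simp
  qed
  have w_pattern: "map (map sgn) (map (map (aff_eval w)) Gs) = S"
    unfolding w_def using pattern x y t by (intro sgn_pattern_segment) simp_all
  then have "layer_pres N w = map (map (aff_eval w)) Gs"
    unfolding layer_pres_def first_pre_aff_eval Gs_def
    by (intro preacts_eq_pattern_pres disjI2) simp
  then have "sign_vector N w = sign_vector N x"
    unfolding sign_vector_eq_iff S_def[symmetric] using w_pattern by simp
  then show "(1 - t) *\<^sub>R x + t *\<^sub>R y \<in> {x. sign_vector N x = s}"
    using x unfolding w_def by simp
qed

lemma net_fun_affine_on_sign_region:
  obtains gb where "\<And>x. sign_vector N x = s \<Longrightarrow> net_fun N x = aff_eval x gb"
proof (cases "\<exists>x0. sign_vector N x0 = s")
  case True
  then obtain x0 where x0: "sign_vector N x0 = s" by blast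
  define S where "S = map (map sgn) (layer_pres N x0)"
  define Gs where "Gs = pattern_pres (fst (snd N)) S (fst N)"
  have "net_fun N x = aff_eval x (neuron_comp (snd (snd N)) (relu_mask (last S) (last Gs)))"
    if "sign_vector N x = s" for x
  proof -
    have lp: "layer_pres N x = map (map (aff_eval x)) Gs"
      using layer_pres_on_sign_region[of N x x0] that x0 unfolding S_def Gs_def by simp
    have "Gs \<noteq> []" unfolding Gs_def by (rule pattern_pres_ne)
    then have last_lp: "last (layer_pres N x) = map (aff_eval x) (last Gs)"
      by (simp add: lp last_map)
    have "S = map (map sgn) (layer_pres N x)"
      using that x0 sign_vector_eq_iff unfolding S_def by metis
    then have "map sgn (map (aff_eval x) (last Gs)) = last S"
      using \<open>Gs \<noteq> []\<close> by (simp add: lp last_map)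
    from map_relu_aff_eval[OF this] show ?thesis
      unfolding net_fun_def last_lp by (simp only: neuron_aff_eval)
  qed
  then show thesis by (rule that)
qed (use that in blast)

definition continuous_entries :: "('a::topological_space \<Rightarrow> real list) \<Rightarrow> nat \<Rightarrow> bool" where
  "continuous_entries z L \<longleftrightarrow> (\<forall>x. length (z x) = L) \<and> (\<forall>i<L. continuous_on UNIV (\<lambda>x. z x ! i))"

lemma continuous_entries_relu:
  "continuous_entries z L \<Longrightarrow> continuous_entries (\<lambda>x. map relu (z x)) L"
  unfolding continuous_entries_def relu_def by (auto intro!: continuous_intros)

lemma continuous_on_neuron:
  "continuous_entries z L \<Longrightarrow> continuous_on UNIV (\<lambda>x. neuron wc (z x))"
  unfolding continuous_entries_def neuron_def
  by (auto simp: sum_list_sum_nth atLeast0LessThan intro!: continuous_intros)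

lemma continuous_entries_apply_layer:
  assumes "continuous_entries z L"
  shows "continuous_entries (\<lambda>x. apply_layer H (z x)) (length H)"
proof -
  have "continuous_on UNIV (\<lambda>x. apply_layer H (z x) ! i)" if "i < length H" for i
    using continuous_on_neuron[OF assms, of "H ! i"] that by (simp add: apply_layer_def)
  then show ?thesis unfolding continuous_entries_def by (simp add: apply_layer_def)
qed

lemma continuous_on_output:
  "continuous_entries z L \<Longrightarrow>
   continuous_on UNIV (\<lambda>x. neuron out (map relu (last (z x # preacts_from Hs (z x)))))"
proof (induction Hs arbitrary: z L)
  case Nil
  then show ?case using continuous_on_neuron[OF continuous_entries_relu] by simp
next
  case (Cons H Hs)
  have "continuous_entries (\<lambda>x. apply_layer H (map relu (z x))) (length H)"
    by (rule continuous_entries_apply_layer[OF continuous_entries_relu[OF Cons.prems]])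
  from Cons.IH[OF this] show ?case by (simp add: Let_def)
qed

lemma continuous_on_net_fun: "continuous_on UNIV (net_fun N)"
proof -
  have "continuous_entries (first_pre N) (length (fst N))"
    unfolding continuous_entries_def first_pre_def
    by (auto simp: case_prod_beta intro!: continuous_intros)
  then show ?thesis
    using continuous_on_output[of "first_pre N"] by (simp add: net_fun_def layer_pres_def)
qed

lemma convex_cell: "C \<in> cells N \<Longrightarrow> convex C"
  unfolding cells_def using convex_sign_region convex_closure by blast

lemma net_fun_affine_on_cell:
  assumes "C \<in> cells N"
  obtains g b where "\<And>x. x \<in> C \<Longrightarrow> net_fun N x = g \<bullet> x + b"
proof -
  obtain s where C: "C = closure {x. sign_vector N x = s}"
    using assms unfolding cells_def by blast
  obtain gb where gb: "\<And>x. sign_vector N x = s \<Longrightarrow> net_fun N x = aff_eval x gb"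
    using net_fun_affine_on_sign_region[of N s] by blast
  have "closed {x. net_fun N x = aff_eval x gb}"
    unfolding aff_eval_def
    by (intro closed_Collect_eq continuous_intros continuous_on_net_fun)
  then have "C \<subseteq> {x. net_fun N x = aff_eval x gb}"
    unfolding C using gb by (intro closure_minimal) auto
  then show thesis using that[of "fst gb" "snd gb"] by (auto simp: aff_eval_def)
qed

text \<open>A supporting hyperplane at a relative interior point of D contains all of D.\<close>
lemma proper_face_supporting_hyperplane:
  fixes C D :: "'a::euclidean_space set"
  assumes "convex C" "D face_of C" "D \<noteq> {}" "D \<noteq> C"
  obtains a c where "a \<noteq> 0" "\<And>y. y \<in> C \<Longrightarrow> c \<le> a \<bullet> y" "D \<subseteq> {y. a \<bullet> y = c}"
proof -
  obtain p where p: "p \<in> rel_interior D"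
    using rel_interior_eq_empty face_of_imp_convex[OF assms(2)] assms(3) by blast
  have "p \<in> C" "p \<notin> rel_interior C"
    using p rel_interior_subset face_of_imp_subset[OF assms(2)]
      face_of_disjoint_rel_interior[OF assms(2,4)] by blast+
  then obtain a where a: "a \<noteq> 0" and supp: "\<And>y. y \<in> C \<Longrightarrow> a \<bullet> p \<le> a \<bullet> y"
    using supporting_hyperplane_rel_boundary[OF assms(1)] by metis
  have "C \<inter> {y. a \<bullet> y = a \<bullet> p} face_of C"
    using face_of_Int_supporting_hyperplane_ge[OF assms(1)] supp by blast
  then have "D \<subseteq> C \<inter> {y. a \<bullet> y = a \<bullet> p}"
    by (rule subset_of_face_of) (use p face_of_imp_subset[OF assms(2)] \<open>p \<in> C\<close> in auto)
  then show thesis using that a supp by blast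
qed

lemma facet_eq_Int_supporting_hyperplane:
  fixes C D :: "'a::euclidean_space set"
  assumes "convex C" "D face_of C" "aff_dim D = int DIM('a) - 1"
    and "a \<noteq> 0" "\<And>y. y \<in> C \<Longrightarrow> c \<le> a \<bullet> y" "D \<subseteq> {y. a \<bullet> y = c}"
  shows "C \<inter> {y. a \<bullet> y = c} = D"
proof (rule ccontr)
  define K where "K = C \<inter> {y. a \<bullet> y = c}"
  assume "K \<noteq> D"
  have K: "K face_of C"
    unfolding K_def using face_of_Int_supporting_hyperplane_ge[OF assms(1)] assms(5) by blast
  have "D face_of K"
    using face_of_subset[OF assms(2) _ face_of_imp_subset[OF K]] face_of_imp_subset[OF assms(2)] assms(6)
    unfolding K_def by blast
  then have "aff_dim D < aff_dim K"
    using face_of_aff_dim_lt[OF face_of_imp_convex[OF K]] \<open>K \<noteq> D\<close> by blast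
  moreover have "aff_dim K \<le> aff_dim {y. a \<bullet> y = c}"
    unfolding K_def by (rule aff_dim_subset) blast
  ultimately show False using assms(3,4) by simp
qed

lemma edge_leaves_supporting_hyperplane:
  fixes C E :: "'a::euclidean_space set"
  assumes "convex C" "\<And>y. y \<in> C \<Longrightarrow> c \<le> a \<bullet> y"
    and "E face_of C" "aff_dim E = 1" "\<not> E \<subseteq> {y. a \<bullet> y = c}"
    and "v \<in> E" "a \<bullet> v = c" "y \<in> E" "y \<noteq> v"
  shows "c < a \<bullet> y"
proof (rule ccontr)
  assume "\<not> c < a \<bullet> y"
  with assms(2,3,8) have "a \<bullet> y = c" using face_of_imp_subset by force
  have EC: "E \<subseteq> C" using face_of_imp_subset[OF assms(3)] .
  have "E \<inter> {x. a \<bullet> x = c} face_of E"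
    using face_of_Int_supporting_hyperplane_ge[OF face_of_imp_convex[OF assms(3)]] assms(2) EC
    by blast
  moreover have "aff_dim E \<le> aff_dim (E \<inter> {x. a \<bullet> x = c})"
  proof -
    have "aff_dim {v, y} \<le> aff_dim (E \<inter> {x. a \<bullet> x = c})"
      by (rule aff_dim_subset) (use assms(6-8) \<open>a \<bullet> y = c\<close> in auto)
    then show ?thesis using assms(4,9) by simp
  qed
  ultimately have "E \<inter> {x. a \<bullet> x = c} = E"
    using face_of_aff_dim_lt[OF face_of_imp_convex[OF assms(3)]] by force
  with assms(5) show False by blast
qed

lemma normal_parallel_if_constant_on_hyperplane_subset:
  fixes D :: "'a::euclidean_space set"
  assumes "a \<noteq> 0" "D \<subseteq> {y. a \<bullet> y = c}" "aff_dim D = int DIM('a) - 1"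
    and "\<And>x y. x \<in> D \<Longrightarrow> y \<in> D \<Longrightarrow> g \<bullet> x = g \<bullet> y"
  obtains \<mu> where "g = \<mu> *\<^sub>R a"
proof -
  have "D \<noteq> {}" using assms(3) DIM_positive[where 'a='a] by (auto simp del: DIM_positive)
  then obtain p where p: "p \<in> D" by blast
  define S where "S = span ((\<lambda>x. x - p) ` D)"
  have "aff_dim D = int (dim ((\<lambda>x. x - p) ` D))"
    by (rule aff_dim_eq_dim_subtract) (simp add: p hull_inc)
  then have dimS: "dim S = DIM('a) - 1" using assms(3) unfolding S_def by (simp add: dim_span)
  have "S \<subseteq> {x. a \<bullet> x = 0}" unfolding S_def
  proof (intro span_minimal)
    show "(\<lambda>x. x - p) ` D \<subseteq> {x. a \<bullet> x = 0}"
    proof (rule image_subsetI)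
      fix x assume "x \<in> D"
      then show "x - p \<in> {x. a \<bullet> x = 0}" using assms(2) p by (auto simp: inner_diff_right)
    qed
  qed (simp add: subspace_hyperplane)
  then have "S = {x. a \<bullet> x = 0}"
    using dimS dim_hyperplane[OF assms(1)]
    by (intro subspace_dim_equal) (simp_all add: S_def subspace_hyperplane)
  moreover have "S \<subseteq> {x. g \<bullet> x = 0}" unfolding S_def
  proof (intro span_minimal)
    show "(\<lambda>x. x - p) ` D \<subseteq> {x. g \<bullet> x = 0}"
      using assms(4)[OF _ p] by (simp add: image_subset_iff inner_diff_right)
  qed (simp add: subspace_hyperplane)
  ultimately have orth: "g \<bullet> x = 0" if "a \<bullet> x = 0" for x using that by blast
  have "g \<bullet> x = ((g \<bullet> a) / (a \<bullet> a)) *\<^sub>R a \<bullet> x" for x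
  proof -
    have "g \<bullet> (x - ((a \<bullet> x) / (a \<bullet> a)) *\<^sub>R a) = 0"
      using assms(1) by (intro orth) (simp add: inner_diff_right)
    then show ?thesis by (simp add: inner_diff_right algebra_simps)
  qed
  then have "g = ((g \<bullet> a) / (a \<bullet> a)) *\<^sub>R a" by (subst vector_eq_rdot[symmetric]) blast
  then show thesis by (rule that)
qed

lemma orientation_by_sign:
  fixes F h :: "'a \<Rightarrow> real"
  assumes F: "\<And>y. y \<in> E \<Longrightarrow> F y = F v + \<mu> * h y"
    and h: "\<And>y. y \<in> E \<Longrightarrow> y \<noteq> v \<Longrightarrow> 0 < h y"
  shows "(0 < \<mu> \<longrightarrow> points_away F E v) \<and> (\<mu> < 0 \<longrightarrow> points_toward F E v)
       \<and> (\<mu> = 0 \<longrightarrow> flat_on F E)"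
proof (intro conjI impI)
  show "points_away F E v" if "0 < \<mu>"
    unfolding points_away_def using F h that by (simp add: mult_pos_pos)
  show "points_toward F E v" if "\<mu> < 0"
    unfolding points_toward_def using F h that by (simp add: mult_neg_pos)
  show "flat_on F E" if "\<mu> = 0"
    unfolding flat_on_def using F that by simp
qed

lemma edges_at_flat_facet_orientation:
  fixes F :: "'a::euclidean_space \<Rightarrow> real" and C D E1 E2 :: "'a set"
  assumes "convex C" and F: "\<And>x. x \<in> C \<Longrightarrow> F x = g \<bullet> x + b"
    and D: "D face_of C" "D \<noteq> C" "aff_dim D = int DIM('a) - 1" "flat_on F D"
    and E1: "E1 face_of C" "aff_dim E1 = 1" "\<not> E1 \<subseteq> D" "v1 \<in> E1" "v1 \<in> D"
    and E2: "E2 face_of C" "aff_dim E2 = 1" "\<not> E2 \<subseteq> D" "v2 \<in> E2" "v2 \<in> D"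
  shows "(points_away F E1 v1 \<and> points_away F E2 v2)
       \<or> (points_toward F E1 v1 \<and> points_toward F E2 v2)
       \<or> (flat_on F E1 \<and> flat_on F E2)"
proof -
  have "D \<noteq> {}" using D(3) DIM_positive[where 'a='a] by (auto simp del: DIM_positive)
  obtain a c where a: "a \<noteq> 0" and supp: "\<And>y. y \<in> C \<Longrightarrow> c \<le> a \<bullet> y"
    and Da: "D \<subseteq> {y. a \<bullet> y = c}"
    using proper_face_supporting_hyperplane[OF \<open>convex C\<close> D(1) \<open>D \<noteq> {}\<close> D(2)] by blast
  have DC: "D \<subseteq> C" using face_of_imp_subset[OF D(1)] .
  have "g \<bullet> x = g \<bullet> y" if "x \<in> D" "y \<in> D" for x y
  proof -
    have "F x = F y" using D(4) that unfolding flat_on_def by blast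
    then show ?thesis using F that DC by (simp add: subset_iff)
  qed
  then obtain \<mu> where g: "g = \<mu> *\<^sub>R a"
    using normal_parallel_if_constant_on_hyperplane_subset[OF a Da D(3)] by blast
  have facet: "C \<inter> {y. a \<bullet> y = c} = D"
    by (rule facet_eq_Int_supporting_hyperplane[OF \<open>convex C\<close> D(1,3) a supp Da])
  have orient: "(0 < \<mu> \<longrightarrow> points_away F E v) \<and> (\<mu> < 0 \<longrightarrow> points_toward F E v)
              \<and> (\<mu> = 0 \<longrightarrow> flat_on F E)"
    if E: "E face_of C" "aff_dim E = 1" "\<not> E \<subseteq> D" "v \<in> E" "v \<in> D" for E v
  proof (rule orientation_by_sign)
    have EC: "E \<subseteq> C" using face_of_imp_subset[OF E(1)] .
    have av: "a \<bullet> v = c" using Da E(5) by blast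
    show "F y = F v + \<mu> * (a \<bullet> y - c)" if "y \<in> E" for y
    proof -
      have "F y = g \<bullet> y + b" "F v = g \<bullet> v + b" using F EC that E(4) by (simp_all add: subset_iff)
      then show ?thesis by (simp add: g av[symmetric] algebra_simps)
    qed
    have "\<not> E \<subseteq> {y. a \<bullet> y = c}" using E(3) EC facet by blast
    then show "0 < a \<bullet> y - c" if "y \<in> E" "y \<noteq> v" for y
      using edge_leaves_supporting_hyperplane[OF \<open>convex C\<close> supp E(1,2) _ E(4) av that] by simp
  qed
  consider "0 < \<mu>" | "\<mu> < 0" | "\<mu> = 0" by linarith
  then show ?thesis using orient[OF E1] orient[OF E2] by cases blast+
qed

theorem mainTheorem17:
  fixes N :: "'n::finite relu_net"
    and C C' D E1 E2 :: "(real^'n) set"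
    and v1 v2 :: "real^'n"
  assumes wf: "wf_net N"
    and C_cell: "C \<in> cells N" and C_dim: "aff_dim C = int CARD('n)"
    and C_flat: "flat_on (net_fun N) C"
    and C'_cell: "C' \<in> cells N" and C'_dim: "aff_dim C' = int CARD('n)"
    and D_int: "C \<inter> C' = D"
    and D_face: "D face_of C" "D face_of C'"
    and D_dim: "aff_dim D = int CARD('n) - 1"
    and E1_cell: "E1 \<in> cells N" "aff_dim E1 = 1" "E1 face_of C'"
    and E2_cell: "E2 \<in> cells N" "aff_dim E2 = 1" "E2 face_of C'"
    and E1_notin: "\<not> E1 \<subseteq> C" and E2_notin: "\<not> E2 \<subseteq> C"
    and v1: "{v1} face_of E1" "v1 \<in> C"
    and v2: "{v2} face_of E2" "v2 \<in> C"
  shows "(points_away (net_fun N) E1 v1 \<and> points_away (net_fun N) E2 v2)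
       \<or> (points_toward (net_fun N) E1 v1 \<and> points_toward (net_fun N) E2 v2)
       \<or> (flat_on (net_fun N) E1 \<and> flat_on (net_fun N) E2)"
proof -
  obtain g b where F: "\<And>x. x \<in> C' \<Longrightarrow> net_fun N x = g \<bullet> x + b"
    using net_fun_affine_on_cell[OF C'_cell] by blast
  have "D \<noteq> C'" using D_dim C'_dim by auto
  have "flat_on (net_fun N) D" using C_flat D_int unfolding flat_on_def by blast
  have v1E: "v1 \<in> E1" and v2E: "v2 \<in> E2"
    using face_of_imp_subset[OF v1(1)] face_of_imp_subset[OF v2(1)] by auto
  have "v1 \<in> D" "v2 \<in> D"
    using v1E v2E face_of_imp_subset[OF E1_cell(3)] face_of_imp_subset[OF E2_cell(3)] v1(2) v2(2)
      D_int by blast+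
  moreover have "\<not> E1 \<subseteq> D" "\<not> E2 \<subseteq> D" using E1_notin E2_notin D_int by blast+
  ultimately show ?thesis
    using edges_at_flat_facet_orientation[OF convex_cell[OF C'_cell] F D_face(2) \<open>D \<noteq> C'\<close> _
        \<open>flat_on _ D\<close> E1_cell(3,2) _ v1E _ E2_cell(3,2) _ v2E] D_dim by simp
qed

end
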